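(* Let $N_1,N_2\ge 1$ be integers, let $0\le q<1$, and consider the following stochastic particle system (a version of the Biham--Middleton--Levine traffic model) on the toroidal lattice of cells $(i,j)$, $i\in\mathbb{Z}/N_1\mathbb{Z}$, $j\in\mathbb{Z}/N_2\mathbb{Z}$. There are $m<N_1N_2$ particles, each cell is vacant or occupied by exactly one particle, and at each moment every particle is of the first type or of the second type. Time is discrete, $t=0,1,2,\dots$. At each step, first all particles of the first type move: a first-type particle in cell $(i,j)$ moves to cell $(i,j+1)$ (index modulo $N_2$) if that cell is vacant, and stays in $(i,j)$ otherwise. Then all particles of the second type move, with respect to the configuration obtained after the first-type movement: a second-type particle in cell $(i,j)$ moves to $(i+1,j)$ (index modulo $N_1$) if that cell is vacant, and stays in $(i,j)$ otherwise. After that, each particle changes its type with probability $q$. A state (positions and types of all particles) is called a state of free movement if, whenever the system is in this state at some time $t_0$, then with probability $1$ at every step from $t_0$ on every particle moves (no particle is ever delayed). If the greatest common divisor of $N_1$ and $N_2$ is less than $3$, then no state in which there is at least one particle of the first type and at least one particle of the second type is a state of free movement.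
   Context: A particle is "delayed" at a step if the cell ahead of it (to the right along its row for the first type, upward along its column for the second type) is occupied at the moment it attempts to move, so that it stays in place. *)

theory Defs
  imports "HOL-Probability.Probability"
begin

text \<open>A state of the BML-type system on the torus (Z/N1) x (Z/N2): cell (i,j) with
  i < N1, j < N2.  s c = None: vacant; Some True: particle of the first type;
  Some False: particle of the second type.\<close>

type_synonym state = "nat \<times> nat \<Rightarrow> bool option"

definition cells :: "nat \<Rightarrow> nat \<Rightarrow> (nat \<times> nat) set" where
  "cells N1 N2 = {0..<N1} \<times> {0..<N2}"

definition right :: "nat \<Rightarrow> nat \<times> nat \<Rightarrow> nat \<times> nat" where
  "right N2 c = (fst c, (snd c + 1) mod N2)"

definition left :: "nat \<Rightarrow> nat \<times> nat \<Rightarrow> nat \<times> nat" where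
  "left N2 c = (fst c, (snd c + N2 - 1) mod N2)"

definition up :: "nat \<Rightarrow> nat \<times> nat \<Rightarrow> nat \<times> nat" where
  "up N1 c = ((fst c + 1) mod N1, snd c)"

definition down :: "nat \<Rightarrow> nat \<times> nat \<Rightarrow> nat \<times> nat" where
  "down N1 c = ((fst c + N1 - 1) mod N1, snd c)"

definition wf_state :: "nat \<Rightarrow> nat \<Rightarrow> state \<Rightarrow> bool" where
  "wf_state N1 N2 s \<longleftrightarrow> (\<forall>c. c \<notin> cells N1 N2 \<longrightarrow> s c = None)
     \<and> card {c \<in> cells N1 N2. s c \<noteq> None} < N1 * N2"

definition move1 :: "nat \<Rightarrow> nat \<Rightarrow> state \<Rightarrow> state" where
  "move1 N1 N2 s = (\<lambda>c. if c \<notin> cells N1 N2 then None else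
     (case s c of
        Some True \<Rightarrow> (if s (right N2 c) = None then None else Some True)
      | Some False \<Rightarrow> Some False
      | None \<Rightarrow> (if s (left N2 c) = Some True then Some True else None)))"

definition move2 :: "nat \<Rightarrow> nat \<Rightarrow> state \<Rightarrow> state" where
  "move2 N1 N2 s = (\<lambda>c. if c \<notin> cells N1 N2 then None else
     (case s c of
        Some False \<Rightarrow> (if s (up N1 c) = None then None else Some False)
      | Some True \<Rightarrow> Some True
      | None \<Rightarrow> (if s (down N1 c) = Some False then Some False else None)))"

definition delayed :: "nat \<Rightarrow> nat \<Rightarrow> state \<Rightarrow> bool" where
  "delayed N1 N2 s \<longleftrightarrow> (\<exists>c \<in> cells N1 N2.
       (s c = Some True \<and> s (right N2 c) \<noteq> None)
     \<or> (move1 N1 N2 s c = Some False \<and> move1 N1 N2 s (up N1 c) \<noteq> None))"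

definition step_pmf :: "nat \<Rightarrow> nat \<Rightarrow> real \<Rightarrow> state \<Rightarrow> state pmf" where
  "step_pmf N1 N2 q s =
     map_pmf (\<lambda>f c. map_option (\<lambda>b. if f c then \<not> b else b) (move2 N1 N2 (move1 N1 N2 s) c))
       (Pi_pmf (cells N1 N2) False (\<lambda>_. bernoulli_pmf q))"

fun state_dist :: "nat \<Rightarrow> nat \<Rightarrow> real \<Rightarrow> state \<Rightarrow> nat \<Rightarrow> state pmf" where
  "state_dist N1 N2 q s 0 = return_pmf s"
| "state_dist N1 N2 q s (Suc n) = bind_pmf (state_dist N1 N2 q s n) (step_pmf N1 N2 q)"

text \<open>State of free movement: with probability 1, at every step no particle is delayed
  (equivalently, by countable additivity, for every step n the probability that some
  particle is delayed at step n is 0).\<close>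
definition free_movement :: "nat \<Rightarrow> nat \<Rightarrow> real \<Rightarrow> state \<Rightarrow> bool" where
  "free_movement N1 N2 q s \<longleftrightarrow>
     (\<forall>n. measure_pmf.prob (state_dist N1 N2 q s n) {s'. delayed N1 N2 s'} = 0)"

end

theory Submission
  imports Defs "HOL-Number_Theory.Cong"
begin

text \<open>With positive probability no particle changes its type in a step, so the
  deterministic dynamics without type changes is a possible evolution of the system. If no
  particle were ever delayed along it, a first-type particle would run along its row and a
  second-type particle up its column, both with unit speed. The two runs are governed by the
  congruences for the times modulo \<open>N1\<close> and \<open>N2\<close>; since \<open>gcd N1 N2 \<le> 2\<close>, one of two
  consecutive differences is divisible by the gcd, and the Chinese remainder theorem yields a
  time at which the cell ahead of the first-type particle is the cell of the second-type
  particle or the cell it has just entered. Then the first-type particle is delayed.\<close>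

definition move :: "nat \<Rightarrow> nat \<Rightarrow> state \<Rightarrow> state" where
  "move N1 N2 s = move2 N1 N2 (move1 N1 N2 s)"

lemma no_flip_in_set_pmf:
  assumes "0 \<le> q" "q < 1"
  shows "(\<lambda>_. False) \<in> set_pmf (Pi_pmf (cells N1 N2) False (\<lambda>_. bernoulli_pmf q))"
proof -
  have fin: "finite (cells N1 N2)" by (simp add: cells_def)
  have "pmf (Pi_pmf (cells N1 N2) False (\<lambda>_. bernoulli_pmf q)) (\<lambda>_. False)
        = (\<Prod>x\<in>cells N1 N2. 1 - q)"
    using assms by (simp add: pmf_Pi[OF fin])
  also have "\<dots> > 0" using assms by (intro prod_pos) auto
  finally show ?thesis by (simp add: set_pmf_iff)
qed

lemma move_in_step_pmf:
  assumes "0 \<le> q" "q < 1"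
  shows "move N1 N2 s \<in> set_pmf (step_pmf N1 N2 q s)"
proof -
  have "move N1 N2 s
      = (\<lambda>f c. map_option (\<lambda>b. if f c then \<not> b else b) (move2 N1 N2 (move1 N1 N2 s) c)) (\<lambda>_. False)"
    by (simp add: move_def fun_eq_iff option.map_ident)
  then show ?thesis
    unfolding step_pmf_def set_map_pmf by (rule image_eqI[OF _ no_flip_in_set_pmf[OF assms]])
qed

lemma funpow_move_in_state_dist:
  assumes "0 \<le> q" "q < 1"
  shows "(move N1 N2 ^^ n) s \<in> set_pmf (state_dist N1 N2 q s n)"
  by (induction n) (auto intro!: move_in_step_pmf[OF assms])

lemma free_movement_not_delayed:
  assumes "free_movement N1 N2 q s" "0 \<le> q" "q < 1"
  shows "\<not> delayed N1 N2 ((move N1 N2 ^^ n) s)"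
proof
  assume "delayed N1 N2 ((move N1 N2 ^^ n) s)"
  then have "measure_pmf.prob (state_dist N1 N2 q s n) {s'. delayed N1 N2 s'} > 0"
    by (intro measure_pmf_posI[OF funpow_move_in_state_dist[OF assms(2,3)]]) simp
  with assms(1) show False unfolding free_movement_def by simp
qed

lemma right_in_cells: "c \<in> cells N1 N2 \<Longrightarrow> right N2 c \<in> cells N1 N2"
  by (cases c) (auto simp: cells_def right_def)

lemma up_in_cells: "c \<in> cells N1 N2 \<Longrightarrow> up N1 c \<in> cells N1 N2"
  by (cases c) (auto simp: cells_def up_def)

lemma left_right: "c \<in> cells N1 N2 \<Longrightarrow> left N2 (right N2 c) = c"
  by (cases c) (auto simp: cells_def left_def right_def mod_Suc)

lemma down_up: "c \<in> cells N1 N2 \<Longrightarrow> down N1 (up N1 c) = c"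
  by (cases c) (auto simp: cells_def down_def up_def mod_Suc)

lemma funpow_right_in_cells: "c \<in> cells N1 N2 \<Longrightarrow> (right N2 ^^ n) c \<in> cells N1 N2"
  by (induction n) (auto intro: right_in_cells)

lemma funpow_up_in_cells: "c \<in> cells N1 N2 \<Longrightarrow> (up N1 ^^ n) c \<in> cells N1 N2"
  by (induction n) (auto intro: up_in_cells)

lemma funpow_right: "c \<in> cells N1 N2 \<Longrightarrow> (right N2 ^^ n) c = (fst c, (snd c + n) mod N2)"
  by (induction n) (auto simp: cells_def right_def mod_Suc_eq)

lemma funpow_up: "c \<in> cells N1 N2 \<Longrightarrow> (up N1 ^^ n) c = ((fst c + n) mod N1, snd c)"
  by (induction n) (auto simp: cells_def up_def mod_Suc_eq)

lemma move_right_if_not_delayed: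
  assumes "\<not> delayed N1 N2 s" "s c = Some True" "c \<in> cells N1 N2"
  shows "move N1 N2 s (right N2 c) = Some True"
proof -
  have "s (right N2 c) = None" using assms unfolding delayed_def by blast
  then have "move1 N1 N2 s (right N2 c) = Some True"
    using assms right_in_cells by (simp add: move1_def left_right)
  then show ?thesis using assms right_in_cells by (simp add: move_def move2_def)
qed

lemma move_up_if_not_delayed:
  assumes "\<not> delayed N1 N2 s" "s c = Some False" "c \<in> cells N1 N2"
  shows "move N1 N2 s (up N1 c) = Some False"
proof -
  have first_phase: "move1 N1 N2 s c = Some False" using assms by (simp add: move1_def)
  then have "move1 N1 N2 s (up N1 c) = None" using assms unfolding delayed_def by blast
  then show ?thesis
    using first_phase assms up_in_cells by (simp add: move_def move2_def down_up)
qed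

lemma funpow_move_right_if_not_delayed:
  assumes "\<forall>k<n. \<not> delayed N1 N2 ((move N1 N2 ^^ k) s)" "s c = Some True" "c \<in> cells N1 N2"
  shows "(move N1 N2 ^^ n) s ((right N2 ^^ n) c) = Some True"
  using assms(1)
proof (induction n)
  case (Suc n)
  with assms(3) show ?case by (auto intro: move_right_if_not_delayed funpow_right_in_cells)
qed (use assms in simp)

lemma funpow_move_up_if_not_delayed:
  assumes "\<forall>k<n. \<not> delayed N1 N2 ((move N1 N2 ^^ k) s)" "s c = Some False" "c \<in> cells N1 N2"
  shows "(move N1 N2 ^^ n) s ((up N1 ^^ n) c) = Some False"
  using assms(1)
proof (induction n)
  case (Suc n)
  with assms(3) show ?case by (auto intro: move_up_if_not_delayed funpow_up_in_cells)
qed (use assms in simp)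

lemma delayed_if_blocked:
  assumes "s p = Some True" "s r = Some False" "p \<in> cells N1 N2" "r \<in> cells N1 N2"
    and "right N2 p = r \<or> right N2 p = up N1 r"
  shows "delayed N1 N2 s"
proof (cases "s (right N2 p) = None")
  case False
  with assms show ?thesis unfolding delayed_def by blast
next
  case True
  then have "right N2 p = up N1 r" using assms by auto
  moreover have "move1 N1 N2 s (right N2 p) = Some True"
    using True assms right_in_cells by (simp add: move1_def left_right)
  moreover have "move1 N1 N2 s r = Some False" using assms by (simp add: move1_def)
  ultimately show ?thesis using assms unfolding delayed_def by auto
qed

lemma cong_pair_solvable:
  fixes u v M1 M2 :: int
  assumes "[u = v] (mod gcd M1 M2)"
  shows "\<exists>x. [x = u] (mod M1) \<and> [x = v] (mod M2)"
proof -
  obtain k where k: "u - v = gcd M1 M2 * k" using assms by (auto simp: cong_iff_dvd_diff)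
  obtain y z where yz: "y * M1 + z * M2 = gcd M1 M2" using bezout_int by blast
  have "u = v + k * (y * M1 + z * M2)" using k yz by (simp add: algebra_simps)
  then have same: "u - k * y * M1 = v + k * z * M2" by (simp add: algebra_simps)
  have "[u - k * y * M1 = u] (mod M1)" "[v + k * z * M2 = v] (mod M2)"
    by (simp_all add: cong_iff_dvd_diff)
  with same show ?thesis by metis
qed

lemma exists_pos_cong_int:
  fixes x M :: int
  assumes "M > 0"
  shows "\<exists>m::nat. m > 0 \<and> [int m = x] (mod M)"
proof -
  have "[x mod M + M = x] (mod M)" by (simp add: cong_def)
  moreover have "x mod M + M > 0" using assms by (simp add: add_nonneg_pos)
  ultimately show ?thesis by (intro exI[of _ "nat (x mod M + M)"]) simp
qed

lemma exists_pos_cong_pair_or_shifted: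
  fixes u v :: int and N1 N2 :: nat
  assumes "N1 > 0" "N2 > 0" "gcd N1 N2 \<le> 2"
  shows "\<exists>m::nat. m > 0 \<and> [int m = v] (mod int N2)
    \<and> ([int m = u] (mod int N1) \<or> [int m = u + 1] (mod int N1))"
proof -
  have "gcd N1 N2 > 0" using assms by simp
  with assms have "gcd N1 N2 = 1 \<or> gcd N1 N2 = 2" by linarith
  then have "gcd (int N1) (int N2) = 1 \<or> gcd (int N1) (int N2) = 2" by simp
  moreover have "(2::int) dvd v - u \<or> 2 dvd v - (u + 1)" by presburger
  ultimately have "[u = v] (mod gcd (int N1) (int N2)) \<or> [u + 1 = v] (mod gcd (int N1) (int N2))"
    by (auto simp: cong_iff_dvd_diff dvd_diff_commute)
  then obtain x where x: "[x = v] (mod int N2)" "[x = u] (mod int N1) \<or> [x = u + 1] (mod int N1)"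
    using cong_pair_solvable by blast
  obtain m :: nat where "m > 0" "[int m = x] (mod int N1 * int N2)"
    using exists_pos_cong_int[of "int N1 * int N2"] assms by auto
  then have "m > 0" "[int m = x] (mod int N1)" "[int m = x] (mod int N2)"
    by (auto intro: cong_modulus_mult simp: mult.commute[of "int N1"])
  with x show ?thesis by (blast intro: cong_trans)
qed

lemma cong_nat_int_diff:
  fixes a b m N :: nat
  shows "[int m = int a - int b] (mod int N) \<longleftrightarrow> [b + m = a] (mod N)"
  by (simp add: cong_int_iff[symmetric] cong_iff_dvd_diff algebra_simps)

lemma orbits_meet:
  assumes "a \<in> cells N1 N2" "b \<in> cells N1 N2" "gcd N1 N2 \<le> 2"
  shows "\<exists>n. (right N2 ^^ Suc n) a = (up N1 ^^ n) b \<or> (right N2 ^^ Suc n) a = (up N1 ^^ Suc n) b"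
proof -
  obtain a1 a2 b1 b2 where ab: "a = (a1, a2)" "b = (b1, b2)" by (cases a, cases b)
  with assms have bounds: "a1 < N1" "a2 < N2" "b1 < N1" "b2 < N2" by (auto simp: cells_def)
  then obtain m :: nat where m: "m > 0" "[int m = int b2 - int a2] (mod int N2)"
    "[int m = int a1 - int b1] (mod int N1) \<or> [int m = int a1 - int b1 + 1] (mod int N1)"
    using exists_pos_cong_pair_or_shifted[of N1 N2 "int b2 - int a2" "int a1 - int b1"] assms(3) by auto
  then obtain n where n: "m = Suc n" using gr0_implies_Suc by blast
  from m(2) have "[a2 + m = b2] (mod N2)" by (simp only: cong_nat_int_diff)
  then have "(a2 + m) mod N2 = b2" using bounds by (simp add: cong_def)
  then have orbit_a: "(right N2 ^^ m) a = (a1, b2)"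
    using assms(1) ab by (simp add: funpow_right)
  from m(3) show ?thesis
  proof
    assume "[int m = int a1 - int b1] (mod int N1)"
    then have "[b1 + m = a1] (mod N1)" by (simp only: cong_nat_int_diff)
    then have "(b1 + m) mod N1 = a1" using bounds by (simp add: cong_def)
    then have "(right N2 ^^ m) a = (up N1 ^^ m) b"
      using orbit_a assms(2) ab by (simp add: funpow_up)
    then show ?thesis unfolding n by blast
  next
    assume "[int m = int a1 - int b1 + 1] (mod int N1)"
    then have "[int n = int a1 - int b1] (mod int N1)"
      using n by (simp add: cong_iff_dvd_diff algebra_simps)
    then have "[b1 + n = a1] (mod N1)" by (simp only: cong_nat_int_diff)
    then have "(b1 + n) mod N1 = a1" using bounds by (simp add: cong_def)
    then have "(right N2 ^^ m) a = (up N1 ^^ n) b"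
      using orbit_a assms(2) ab by (simp add: funpow_up)
    then show ?thesis unfolding n by blast
  qed
qed

theorem theorem1:
  fixes N1 N2 :: nat and q :: real and s :: state
  assumes "N1 \<ge> 1" and "N2 \<ge> 1"
    and "0 \<le> q" and "q < 1"
    and "gcd N1 N2 < 3"
    and "wf_state N1 N2 s"
    and "\<exists>c. s c = Some True"
    and "\<exists>c. s c = Some False"
  shows "\<not> free_movement N1 N2 q s"
proof
  assume "free_movement N1 N2 q s"
  then have never_delayed: "\<forall>k<n. \<not> delayed N1 N2 ((move N1 N2 ^^ k) s)" for n
    using assms(3,4) free_movement_not_delayed by blast
  obtain a b where ab: "s a = Some True" "s b = Some False" using assms(7,8) by blast
  with assms(6) have cells: "a \<in> cells N1 N2" "b \<in> cells N1 N2"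
    unfolding wf_state_def by (metis option.distinct(1))+
  obtain n where meet: "right N2 ((right N2 ^^ n) a) = (up N1 ^^ n) b
      \<or> right N2 ((right N2 ^^ n) a) = up N1 ((up N1 ^^ n) b)"
    using orbits_meet[OF cells] assms(5) by auto
  have "delayed N1 N2 ((move N1 N2 ^^ n) s)"
  proof (rule delayed_if_blocked[OF _ _ _ _ meet])
    show "(move N1 N2 ^^ n) s ((right N2 ^^ n) a) = Some True"
      using funpow_move_right_if_not_delayed[OF never_delayed ab(1) cells(1)] .
    show "(move N1 N2 ^^ n) s ((up N1 ^^ n) b) = Some False"
      using funpow_move_up_if_not_delayed[OF never_delayed ab(2) cells(2)] .
    show "(right N2 ^^ n) a \<in> cells N1 N2" "(up N1 ^^ n) b \<in> cells N1 N2"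
      using cells by (simp_all add: funpow_right_in_cells funpow_up_in_cells)
  qed
  with never_delayed[of "Suc n"] show False by simp
qed

end
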